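(* Let $(\tau_i,u_i)_{i\in\mathbb Z}$ be a $C^1$-in-time solution of scheme (H) with $\tau_i>0$, and $(\bar\tau_i,\bar u_i)_{i\in\mathbb Z}$ a $C^1$-in-time solution of scheme (P) with $\bar\tau_i>0$ (same $\lambda$, $\sigma$, $\Delta x$). Then for every $i\in\mathbb Z$, $$\frac{d\eta_i^\varepsilon}{dt}+\frac{1}{\Delta x}(\psi_{i+1/2}-\psi_{i-1/2})=-\sigma(u_i-\bar u_i)^2+\frac1\sigma\,\frac{p(\bar\tau_{i+2})-2p(\bar\tau_i)+p(\bar\tau_{i-2})}{(2\Delta x)^2}\,p(\tau_i|\bar\tau_i)+\frac{\varepsilon^2}{\sigma}(u_i-\bar u_i)\frac{d}{dt}\Big(\frac{p(\bar\tau_{i+1})-p(\bar\tau_{i-1})}{2\Delta x}\Big)+R_i^u+R_i^\tau,$$ where $\psi_{i+1/2}=\frac12(u_i-\bar u_i)(p(\tau_{i+1})-p(\bar\tau_{i+1}))+\frac12(u_{i+1}-\bar u_{i+1})(p(\tau_i)-p(\bar\tau_i))$, $R_i^u=\frac{\lambda\varepsilon^2}{2\Delta x}(u_i-\bar u_i)(u_{i+1}-2u_i+u_{i-1})$, $R_i^\tau=-\frac{\lambda}{2\Delta x}\Big((p(\tau_i)-p(\bar\tau_i))(\tau_{i+1}-2\tau_i+\tau_{i-1})-(\tau_i-\bar\tau_i)p'(\bar\tau_i)(\bar\tau_{i+1}-2\bar\tau_i+\bar\tau_{i-1})\Big)$.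
   Context: The pressure $p\in C^2((0,\infty))$ satisfies $p>0$, $p'<0$. Fix $\tau_\star>0$, $P(\tau)=\int_{\tau_\star}^\tau p(s)ds$, $P(\tau|\bar\tau)=P(\tau)-P(\bar\tau)-p(\bar\tau)(\tau-\bar\tau)$, $p(\tau|\bar\tau)=p(\tau)-p(\bar\tau)-p'(\bar\tau)(\tau-\bar\tau)$. Parameters $\varepsilon,\sigma,\Delta x,\lambda>0$. Scheme (H): $\frac{d}{dt}\tau_i=\frac{1}{2\Delta x}(u_{i+1}-u_{i-1})+\frac{\lambda}{2\Delta x}(\tau_{i+1}-2\tau_i+\tau_{i-1})$, $\frac{d}{dt}u_i=\frac{\lambda}{2\Delta x}(u_{i+1}-2u_i+u_{i-1})-\frac{1}{2\varepsilon^2\Delta x}(p(\tau_{i+1})-p(\tau_{i-1}))-\frac{\sigma}{\varepsilon^2}u_i$. Scheme (P): $\frac{d}{dt}\bar\tau_i=\frac{1}{2\Delta x}(\bar u_{i+1}-\bar u_{i-1})+\frac{\lambda}{2\Delta x}(\bar\tau_{i+1}-2\bar\tau_i+\bar\tau_{i-1})$, $\sigma\bar u_i=-\frac{p(\bar\tau_{i+1})-p(\bar\tau_{i-1})}{2\Delta x}$. Discrete relative entropy $\eta_i^\varepsilon=\frac{\varepsilon^2}{2}(u_i-\bar u_i)^2-P(\tau_i|\bar\tau_i)$. *)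

theory Defs
  imports "HOL-Analysis.Analysis"
begin

definition Pot :: "(real \<Rightarrow> real) \<Rightarrow> real \<Rightarrow> real \<Rightarrow> real" where
  "Pot p ts x = (if ts \<le> x then integral {ts..x} p else - integral {x..ts} p)"

definition Prel :: "(real \<Rightarrow> real) \<Rightarrow> real \<Rightarrow> real \<Rightarrow> real \<Rightarrow> real" where
  "Prel p ts x xb = Pot p ts x - Pot p ts xb - p xb * (x - xb)"

definition prel :: "(real \<Rightarrow> real) \<Rightarrow> (real \<Rightarrow> real) \<Rightarrow> real \<Rightarrow> real \<Rightarrow> real" where
  "prel p p' x xb = p x - p xb - p' xb * (x - xb)"

definition eta :: "real \<Rightarrow> (real \<Rightarrow> real) \<Rightarrow> real \<Rightarrow> real \<Rightarrow> real \<Rightarrow> real \<Rightarrow> real \<Rightarrow> real" where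
  "eta eps p ts u ub x xb = eps\<^sup>2 / 2 * (u - ub)\<^sup>2 - Prel p ts x xb"

end

theory Submission
  imports Defs
begin

text \<open>Differentiating the relative entropy in time gives
  \<open>\<epsilon>\<^sup>2 w w' - (p(\<tau>) - p(\<tau>\<^sub>b)) \<tau>' + p'(\<tau>\<^sub>b)(\<tau> - \<tau>\<^sub>b) \<tau>\<^sub>b'\<close> with \<open>w = u - u\<^sub>b\<close>.
  Substituting both schemes, \<open>w\<close> times the centred differences of \<open>p(\<tau>) - p(\<tau>\<^sub>b)\<close> and
  \<open>p(\<tau>) - p(\<tau>\<^sub>b)\<close> times the centred differences of \<open>w\<close> assemble into the discrete divergence
  of \<open>\<psi>\<close>. What survives is the relaxation term, the two numerical-viscosity remainders,
  \<open>-\<epsilon>\<^sup>2 w u\<^sub>b'\<close> (by (P), \<open>\<epsilon>\<^sup>2/\<sigma>\<close> times \<open>w\<close> times the rate of change of the limit pressure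
  gradient), and the centred difference of the limit velocity \<open>u\<^sub>b\<close> times \<open>-p(\<tau>|\<tau>\<^sub>b)\<close>; by scheme (P) that
  difference is the discrete Laplacian of \<open>p(\<tau>\<^sub>b)\<close> divided by \<open>-\<sigma>\<close>.\<close>

lemma has_real_derivative_Pot:
  fixes p :: "real \<Rightarrow> real"
  assumes p_cont: "continuous_on {a<..} p" and "a < ts" and "a < x"
  shows "((\<lambda>y. Pot p ts y) has_real_derivative p x) (at x)"
proof -
  define c where "c = (a + min ts x) / 2"
  define b where "b = max ts x + 1"
  have c: "a < c" "c < x" "c < ts" using assms by (auto simp: c_def)
  have b: "x < b" "ts < b" by (auto simp: b_def)
  have cont: "continuous_on {c..b} p" using c by (intro continuous_on_subset[OF p_cont]) auto
  have int: "\<And>l r. c \<le> l \<Longrightarrow> r \<le> b \<Longrightarrow> p integrable_on {l..r}"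
    by (rule integrable_continuous_real, rule continuous_on_subset[OF cont]) auto
  have Pot_eq: "Pot p ts y = integral {c..y} p - integral {c..ts} p" if "y \<in> {c<..<b}" for y
  proof (cases "ts \<le> y")
    case True
    have "integral {c..ts} p + integral {ts..y} p = integral {c..y} p"
      using True c that by (intro Henstock_Kurzweil_Integration.integral_combine[OF _ _ int[of c y]]) auto
    then show ?thesis using True by (simp add: Pot_def)
  next
    case False
    have "integral {c..y} p + integral {y..ts} p = integral {c..ts} p"
      using False c that b by (intro Henstock_Kurzweil_Integration.integral_combine[OF _ _ int[of c ts]]) auto
    then show ?thesis using False by (simp add: Pot_def)
  qed
  have "((\<lambda>y. integral {c..y} p) has_real_derivative p x) (at x within {c..b})"
    using cont c b by (intro integral_has_real_derivative) auto
  then have "((\<lambda>y. integral {c..y} p - integral {c..ts} p) has_real_derivative p x) (at x)"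
    using c b by (auto simp: at_within_Icc_at intro: derivative_eq_intros)
  then show ?thesis
    by (rule has_field_derivative_transform_within_open[where S="{c<..<b}"])
       (use c b Pot_eq in auto)
qed

lemma has_real_derivative_eta:
  fixes p p' u ub tau taub :: "real \<Rightarrow> real"
  assumes p_deriv: "\<And>x. x > 0 \<Longrightarrow> (p has_real_derivative p' x) (at x)"
    and "ts > 0" and "tau t > 0" and "taub t > 0"
    and u: "(u has_real_derivative u') (at t)" and ub: "(ub has_real_derivative ub') (at t)"
    and tau: "(tau has_real_derivative tau') (at t)" and taub: "(taub has_real_derivative taub') (at t)"
  shows "((\<lambda>s. eta eps p ts (u s) (ub s) (tau s) (taub s)) has_real_derivative
            eps\<^sup>2 * (u t - ub t) * (u' - ub') - (p (tau t) - p (taub t)) * tau'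
            + p' (taub t) * (tau t - taub t) * taub') (at t)"
proof -
  have p_cont: "continuous_on {0<..} p"
    by (intro continuous_at_imp_continuous_on ballI DERIV_isCont[OF p_deriv]) auto
  have Pot_tau: "((\<lambda>s. Pot p ts (tau s)) has_real_derivative p (tau t) * tau') (at t)"
    using DERIV_chain2[OF has_real_derivative_Pot[OF p_cont] tau] assms(2,3) by simp
  have Pot_taub: "((\<lambda>s. Pot p ts (taub s)) has_real_derivative p (taub t) * taub') (at t)"
    using DERIV_chain2[OF has_real_derivative_Pot[OF p_cont] taub] assms(2,4) by simp
  have p_taub: "((\<lambda>s. p (taub s)) has_real_derivative p' (taub t) * taub') (at t)"
    by (rule DERIV_chain2[OF p_deriv[OF assms(4)] taub])
  show ?thesis
    unfolding eta_def Prel_def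
    by (rule derivative_eq_intros Pot_tau Pot_taub p_taub u ub tau taub refl)+
       (simp add: algebra_simps power2_eq_square)
qed

lemma relative_entropy_balance_algebraic:
  fixes eps sig dx lam u0 u1 um ub0 ub1 ubm tau0 tau1 taum taub0 taub1 taubm
    p0 p1 pm pb0 pb1 pbm pb2 pbm2 dpb u' ub' tau' taub' dq :: real
  assumes "eps \<noteq> 0" and "sig \<noteq> 0" and "dx \<noteq> 0"
    and H_tau: "tau' = (u1 - um) / (2*dx) + lam / (2*dx) * (tau1 - 2 * tau0 + taum)"
    and H_u: "u' = lam / (2*dx) * (u1 - 2 * u0 + um) - (p1 - pm) / (2 * eps\<^sup>2 * dx) - sig / eps\<^sup>2 * u0"
    and P_tau: "taub' = (ub1 - ubm) / (2*dx) + lam / (2*dx) * (taub1 - 2 * taub0 + taubm)"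
    and P_u: "sig * ub0 = - (pb1 - pbm) / (2*dx)"
    and P_u_succ: "sig * ub1 = - (pb2 - pb0) / (2*dx)"
    and P_u_pred: "sig * ubm = - (pb0 - pbm2) / (2*dx)"
    and dq: "dq = - sig * ub'"
  shows "eps\<^sup>2 * (u0 - ub0) * (u' - ub') - (p0 - pb0) * tau' + dpb * (tau0 - taub0) * taub'
      + 1/dx * ((1/2 * (u0 - ub0) * (p1 - pb1) + 1/2 * (u1 - ub1) * (p0 - pb0))
              - (1/2 * (um - ubm) * (p0 - pb0) + 1/2 * (u0 - ub0) * (pm - pbm)))
    = - sig * (u0 - ub0)\<^sup>2
      + 1/sig * (pb2 - 2 * pb0 + pbm2) / (2*dx)\<^sup>2 * (p0 - pb0 - dpb * (tau0 - taub0))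
      + eps\<^sup>2/sig * (u0 - ub0) * dq
      + lam * eps\<^sup>2 / (2*dx) * (u0 - ub0) * (u1 - 2 * u0 + um)
      + - lam / (2*dx) * ((p0 - pb0) * (tau1 - 2 * tau0 + taum)
                          - (tau0 - taub0) * dpb * (taub1 - 2 * taub0 + taubm))"
    (is "?lhs = ?rhs")
proof -
  define k where "k = 1 / (2*dx)"
  define w where "w = u0 - ub0"
  have relaxation: "eps\<^sup>2 * w * u' = lam * eps\<^sup>2 * k * w * (u1 - 2 * u0 + um) - sig * w\<^sup>2
      - k * w * ((p1 - pb1) - (pm - pbm))"
  proof -
    have "eps\<^sup>2 * u' = lam * eps\<^sup>2 * k * (u1 - 2 * u0 + um) - k * (p1 - pm) - sig * u0"
      using assms(1,3) by (simp add: H_u k_def field_simps power2_eq_square)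
    moreover have "sig * u0 = sig * w - k * (pb1 - pbm)"
      using P_u by (simp add: w_def k_def algebra_simps diff_divide_distrib)
    ultimately have "eps\<^sup>2 * u' = lam * eps\<^sup>2 * k * (u1 - 2 * u0 + um) - sig * w
        - k * ((p1 - pb1) - (pm - pbm))"
      by (simp add: algebra_simps)
    then have "eps\<^sup>2 * w * u' = w * (lam * eps\<^sup>2 * k * (u1 - 2 * u0 + um) - sig * w
        - k * ((p1 - pb1) - (pm - pbm)))"
      by (metis mult.commute mult.left_commute)
    then show ?thesis by (simp add: algebra_simps power2_eq_square)
  qed
  have drift: "eps\<^sup>2 * w * ub' = - (eps\<^sup>2/sig * w * dq)"
    using assms(2) by (simp add: dq)
  have limit_velocity: "1/sig * (pb2 - 2 * pb0 + pbm2) / (2*dx)\<^sup>2 = - k * (ub1 - ubm)"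
  proof -
    have "k * (pb2 - pb0) = - sig * ub1" "k * (pb0 - pbm2) = - sig * ubm"
      using P_u_succ P_u_pred by (simp_all add: k_def diff_divide_distrib)
    then have "k * k * (pb2 - 2 * pb0 + pbm2) = k * (k * (pb2 - pb0) - k * (pb0 - pbm2))"
      by (simp add: algebra_simps)
    also have "\<dots> = - sig * k * (ub1 - ubm)"
      unfolding \<open>k * (pb2 - pb0) = - sig * ub1\<close> \<open>k * (pb0 - pbm2) = - sig * ubm\<close>
      by (simp add: algebra_simps)
    finally have "k * k * (pb2 - 2 * pb0 + pbm2) = - sig * k * (ub1 - ubm)" .
    moreover have "1/sig * (pb2 - 2 * pb0 + pbm2) / (2*dx)\<^sup>2 = 1/sig * (k * k * (pb2 - 2 * pb0 + pbm2))"
      by (simp add: k_def power2_eq_square)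
    ultimately show ?thesis
      using assms(2) by simp
  qed
  have tau': "tau' = k * (u1 - um) + lam * k * (tau1 - 2 * tau0 + taum)"
    and taub': "taub' = k * (ub1 - ubm) + lam * k * (taub1 - 2 * taub0 + taubm)"
    by (simp_all add: H_tau P_tau k_def)
  have inv_dx: "1/dx = 2 * k" and div_2dx: "\<And>x. x / (2*dx) = k * x"
    using assms(3) by (simp_all add: k_def)
  have "?lhs = eps\<^sup>2 * w * u' - eps\<^sup>2 * w * ub' - (p0 - pb0) * tau' + dpb * (tau0 - taub0) * taub'
      + k * (w * ((p1 - pb1) - (pm - pbm)) + (p0 - pb0) * ((u1 - ub1) - (um - ubm)))"
    unfolding inv_dx div_2dx by (simp add: w_def field_simps)
  also have "\<dots> = - sig * w\<^sup>2
      + 1/sig * (pb2 - 2 * pb0 + pbm2) / (2*dx)\<^sup>2 * (p0 - pb0 - dpb * (tau0 - taub0))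
      + eps\<^sup>2/sig * w * dq + lam * eps\<^sup>2 * k * w * (u1 - 2 * u0 + um)
      - lam * k * ((p0 - pb0) * (tau1 - 2 * tau0 + taum)
                   - (tau0 - taub0) * dpb * (taub1 - 2 * taub0 + taubm))"
    unfolding relaxation drift limit_velocity tau' taub' by (simp add: algebra_simps)
  also have "\<dots> = ?rhs"
    unfolding inv_dx div_2dx by (simp add: w_def field_simps)
  finally show ?thesis .
qed

theorem lemma3p2:
  fixes p p' p'' :: "real \<Rightarrow> real"
    and ts eps sig dx lam :: real
    and J :: "real set"
    and tau u tau' u' taub ub taub' ub' :: "int \<Rightarrow> real \<Rightarrow> real"
  assumes p_deriv: "\<And>x. x > 0 \<Longrightarrow> (p has_real_derivative p' x) (at x)"
    and p'_deriv: "\<And>x. x > 0 \<Longrightarrow> (p' has_real_derivative p'' x) (at x)"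
    and p''_cont: "continuous_on {0<..} p''"
    and p_pos: "\<And>x. x > 0 \<Longrightarrow> p x > 0"
    and p'_neg: "\<And>x. x > 0 \<Longrightarrow> p' x < 0"
    and ts_pos: "ts > 0"
    and eps_pos: "eps > 0" and sigma_pos: "sig > 0" and dx_pos: "dx > 0" and lam_pos: "lam > 0"
    and J_open: "open J"
    \<comment> \<open>(tau,u): C^1-in-time solution of scheme (H) on J with tau > 0\<close>
    and tau_der: "\<And>i t. t \<in> J \<Longrightarrow> (tau i has_real_derivative tau' i t) (at t)"
    and u_der: "\<And>i t. t \<in> J \<Longrightarrow> (u i has_real_derivative u' i t) (at t)"
    and tau'_cont: "\<And>i. continuous_on J (tau' i)"
    and u'_cont: "\<And>i. continuous_on J (u' i)"
    and tau_pos: "\<And>i t. t \<in> J \<Longrightarrow> tau i t > 0"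
    and H_tau: "\<And>i t. t \<in> J \<Longrightarrow> tau' i t =
        (u (i+1) t - u (i-1) t) / (2*dx) + lam / (2*dx) * (tau (i+1) t - 2 * tau i t + tau (i-1) t)"
    and H_u: "\<And>i t. t \<in> J \<Longrightarrow> u' i t =
        lam / (2*dx) * (u (i+1) t - 2 * u i t + u (i-1) t)
        - (p (tau (i+1) t) - p (tau (i-1) t)) / (2 * eps\<^sup>2 * dx) - sig / eps\<^sup>2 * u i t"
    \<comment> \<open>(taub,ub): C^1-in-time solution of scheme (P) on J with taub > 0\<close>
    and taub_der: "\<And>i t. t \<in> J \<Longrightarrow> (taub i has_real_derivative taub' i t) (at t)"
    and ub_der: "\<And>i t. t \<in> J \<Longrightarrow> (ub i has_real_derivative ub' i t) (at t)"
    and taub'_cont: "\<And>i. continuous_on J (taub' i)"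
    and ub'_cont: "\<And>i. continuous_on J (ub' i)"
    and taub_pos: "\<And>i t. t \<in> J \<Longrightarrow> taub i t > 0"
    and P_tau: "\<And>i t. t \<in> J \<Longrightarrow> taub' i t =
        (ub (i+1) t - ub (i-1) t) / (2*dx) + lam / (2*dx) * (taub (i+1) t - 2 * taub i t + taub (i-1) t)"
    and P_u: "\<And>i t. t \<in> J \<Longrightarrow> sig * ub i t = - (p (taub (i+1) t) - p (taub (i-1) t)) / (2*dx)"
    and t_in: "t \<in> J"
  shows "let psi = (\<lambda>j. 1/2 * (u j t - ub j t) * (p (tau (j+1) t) - p (taub (j+1) t))
                        + 1/2 * (u (j+1) t - ub (j+1) t) * (p (tau j t) - p (taub j t)));
             Ru = lam * eps\<^sup>2 / (2*dx) * (u i t - ub i t) * (u (i+1) t - 2 * u i t + u (i-1) t);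
             Rtau = - lam / (2*dx) * ((p (tau i t) - p (taub i t)) * (tau (i+1) t - 2 * tau i t + tau (i-1) t)
                      - (tau i t - taub i t) * p' (taub i t) * (taub (i+1) t - 2 * taub i t + taub (i-1) t))
         in \<exists>D. ((\<lambda>s. eta eps p ts (u i s) (ub i s) (tau i s) (taub i s)) has_real_derivative D) (at t)
             \<and> D + 1/dx * (psi i - psi (i-1)) =
                 - sig * (u i t - ub i t)\<^sup>2
                 + 1/sig * (p (taub (i+2) t) - 2 * p (taub i t) + p (taub (i-2) t)) / (2*dx)\<^sup>2
                     * prel p p' (tau i t) (taub i t)
                 + eps\<^sup>2/sig * (u i t - ub i t)
                     * deriv (\<lambda>s. (p (taub (i+1) s) - p (taub (i-1) s)) / (2*dx)) t
                 + Ru + Rtau"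
proof -
  define D where "D = eps\<^sup>2 * (u i t - ub i t) * (u' i t - ub' i t)
    - (p (tau i t) - p (taub i t)) * tau' i t + p' (taub i t) * (tau i t - taub i t) * taub' i t"
  have eta_deriv: "((\<lambda>s. eta eps p ts (u i s) (ub i s) (tau i s) (taub i s)) has_real_derivative D) (at t)"
    unfolding D_def using t_in
    by (intro has_real_derivative_eta[OF p_deriv ts_pos] tau_pos taub_pos u_der ub_der tau_der taub_der)
  have "((\<lambda>s. (p (taub (i+1) s) - p (taub (i-1) s)) / (2*dx)) has_real_derivative - sig * ub' i t) (at t)"
  proof (rule has_field_derivative_transform_within_open[where S=J])
    show "((\<lambda>s. - sig * ub i s) has_real_derivative - sig * ub' i t) (at t)"
      using t_in by (intro DERIV_cmult ub_der)
    show "- sig * ub i s = (p (taub (i+1) s) - p (taub (i-1) s)) / (2*dx)" if "s \<in> J" for s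
      using P_u[OF that, of i] by (simp add: divide_simps)
  qed (use J_open t_in in auto)
  then have limit_flux_deriv: "deriv (\<lambda>s. (p (taub (i+1) s) - p (taub (i-1) s)) / (2*dx)) t = - sig * ub' i t"
    by (rule DERIV_imp_deriv)
  show ?thesis
    unfolding Let_def limit_flux_deriv prel_def diff_add_cancel
    using P_u[OF t_in, of "i+1"] P_u[OF t_in, of "i-1"] eps_pos sigma_pos dx_pos
    by (intro exI[of _ D] conjI eta_deriv, unfold D_def,
        intro relative_entropy_balance_algebraic H_tau[OF t_in] H_u[OF t_in] P_tau[OF t_in] P_u[OF t_in])
       (auto simp: add.assoc diff_diff_eq)
qed

end
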